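(* For all $x_0,x_1\in\mathbb{R}^n$ and any $F'(x_1)\in\partial F(x_1)$, $$F(x_0)-F(x_1)-\langle F'(x_1),x_0-x_1\rangle\le2\left(\frac{2\|A\|^2\mathcal{D}_{v,Y}}{\sigma_v}\right)^{1/2}\|x_0-x_1\|.$$
   Context: $F(x):=\max_{y\in Y}\{\langle Ax,y\rangle-\hat g(y)\}$ for $x\in\mathbb{R}^n$, where $Y\subseteq\mathbb{R}^m$ is a nonempty convex compact set, $\hat g:Y\to\mathbb{R}$ continuous convex, $A:\mathbb{R}^n\to\mathbb{R}^m$ linear. $\mathbb{R}^n$ carries a norm $\|\cdot\|$, $\mathbb{R}^m$ a norm $\|\cdot\|_Y$, and $\|A\|:=\max\{\langle Ax,y\rangle:\|x\|\le1,\|y\|_Y\le1\}$. $v$ is a prox-function of $Y$: differentiable and strongly convex with modulus $\sigma_v$ w.r.t. $\|\cdot\|_Y$; $\mathcal{D}_{v,Y}:=\max_{y,z\in Y}\{v(y)-v(z)-\langle\nabla v(z),y-z\rangle\}$. *)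

theory Defs
  imports "HOL-Analysis.Analysis"
begin

definition is_norm :: "('a::real_vector \<Rightarrow> real) \<Rightarrow> bool" where
  "is_norm N \<longleftrightarrow> (\<forall>x. N x = 0 \<longleftrightarrow> x = 0) \<and> (\<forall>x y. N (x + y) \<le> N x + N y)
     \<and> (\<forall>c x. N (c *\<^sub>R x) = \<bar>c\<bar> * N x)"

definition op_norm_gen :: "('a \<Rightarrow> real) \<Rightarrow> ('b::real_inner \<Rightarrow> real) \<Rightarrow> ('a \<Rightarrow> 'b) \<Rightarrow> real" where
  "op_norm_gen N NY A = Sup {inner (A x) y | x y. N x \<le> 1 \<and> NY y \<le> 1}"

definition Fmax :: "('a \<Rightarrow> 'b::real_inner) \<Rightarrow> ('b \<Rightarrow> real) \<Rightarrow> 'b set \<Rightarrow> 'a \<Rightarrow> real" where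
  "Fmax A g Y x = Sup ((\<lambda>y. inner (A x) y - g y) ` Y)"

definition subdiff :: "('a::real_inner \<Rightarrow> real) \<Rightarrow> 'a \<Rightarrow> 'a set" where
  "subdiff f x = {s. \<forall>z. f x + inner s (z - x) \<le> f z}"

definition strongly_convex_on :: "'b::real_vector set \<Rightarrow> ('b \<Rightarrow> real) \<Rightarrow> real \<Rightarrow> ('b \<Rightarrow> real) \<Rightarrow> bool" where
  "strongly_convex_on Y v \<sigma> NY \<longleftrightarrow> convex Y \<and>
     (\<forall>y\<in>Y. \<forall>z\<in>Y. \<forall>t\<in>{0..1}.
        v ((1 - t) *\<^sub>R y + t *\<^sub>R z) \<le> (1 - t) * v y + t * v z - \<sigma> / 2 * t * (1 - t) * (NY (y - z))\<^sup>2)"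

definition prox_function :: "'b::real_inner set \<Rightarrow> ('b \<Rightarrow> real) \<Rightarrow> ('b \<Rightarrow> 'b) \<Rightarrow> real \<Rightarrow> ('b \<Rightarrow> real) \<Rightarrow> bool" where
  "prox_function Y v gv \<sigma> NY \<longleftrightarrow> \<sigma> > 0 \<and>
     (\<forall>z\<in>Y. (v has_derivative (\<lambda>h. inner (gv z) h)) (at z)) \<and> strongly_convex_on Y v \<sigma> NY"

definition bregman_set :: "'b::real_inner set \<Rightarrow> ('b \<Rightarrow> real) \<Rightarrow> ('b \<Rightarrow> 'b) \<Rightarrow> real set" where
  "bregman_set Y v gv = {v y - v z - inner (gv z) (y - z) | y z. y \<in> Y \<and> z \<in> Y}"

definition D_vY :: "'b::real_inner set \<Rightarrow> ('b \<Rightarrow> real) \<Rightarrow> ('b \<Rightarrow> 'b) \<Rightarrow> real" where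
  "D_vY Y v gv = Sup (bregman_set Y v gv)"

end

theory Submission
  imports Defs
begin

text \<open>
  Let \<open>d = x\<^sub>0 - x\<^sub>1\<close>, let \<open>y\<^sub>0\<close> attain the maximum defining \<open>F(x\<^sub>0)\<close> and \<open>y\<^sub>2\<close> the one
  defining \<open>F(x\<^sub>1 - d)\<close>. The subgradient inequality at the reflected point \<open>x\<^sub>1 - d\<close>, together
  with \<open>F(x\<^sub>1) \<ge> \<langle>Ax\<^sub>1, y\<rangle> - g(y)\<close> for \<open>y = y\<^sub>0, y\<^sub>2\<close>, gives
  \<open>F(x\<^sub>0) - F(x\<^sub>1) - \<langle>s, d\<rangle> \<le> \<langle>Ad, y\<^sub>0 - y\<^sub>2\<rangle> \<le> \<parallel>A\<parallel> \<parallel>d\<parallel> \<parallel>y\<^sub>0 - y\<^sub>2\<parallel>\<^sub>Y\<close>.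
  Strong convexity bounds the Bregman distance of \<open>v\<close> from below by \<open>\<sigma>/2 \<parallel>y\<^sub>0 - y\<^sub>2\<parallel>\<^sub>Y\<^sup>2\<close>,
  so \<open>\<parallel>y\<^sub>0 - y\<^sub>2\<parallel>\<^sub>Y \<le> (2 \<D>/\<sigma>)\<^sup>1\<^sup>/\<^sup>2\<close>; the bound even holds without the factor 2.
\<close>

lemma is_norm_zero: "is_norm N \<Longrightarrow> N 0 = 0"
  unfolding is_norm_def by blast

lemma is_norm_triangle: "is_norm N \<Longrightarrow> N (x + y) \<le> N x + N y"
  unfolding is_norm_def by blast

lemma is_norm_scaleR: "is_norm N \<Longrightarrow> N (c *\<^sub>R x) = \<bar>c\<bar> * N x"
  unfolding is_norm_def by blast

lemma is_norm_minus: "is_norm N \<Longrightarrow> N (- x) = N x"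
  using is_norm_scaleR[of N "-1" x] by simp

lemma is_norm_nonneg:
  assumes "is_norm N" shows "N x \<ge> 0"
  using is_norm_triangle[OF assms, of x "- x"] is_norm_minus[OF assms, of x] is_norm_zero[OF assms]
  by simp

lemma is_norm_pos: "is_norm N \<Longrightarrow> x \<noteq> 0 \<Longrightarrow> N x > 0"
  using is_norm_nonneg[of N x] unfolding is_norm_def by force

lemma is_norm_sum:
  assumes "is_norm N" shows "N (\<Sum>b\<in>B. f b) \<le> (\<Sum>b\<in>B. N (f b))"
proof (induction B rule: infinite_finite_induct)
  case (insert b B)
  then show ?case using is_norm_triangle[OF assms, of "f b" "sum f B"] by simp
qed (simp_all add: is_norm_zero[OF assms])

lemma is_norm_le_sum_Basis:
  fixes N :: "'a::euclidean_space \<Rightarrow> real"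
  assumes "is_norm N" shows "N x \<le> (\<Sum>b\<in>Basis. N b) * norm x"
proof -
  have "N x = N (\<Sum>b\<in>Basis. (x \<bullet> b) *\<^sub>R b)" by (simp add: euclidean_representation)
  also have "\<dots> \<le> (\<Sum>b\<in>Basis. N ((x \<bullet> b) *\<^sub>R b))" by (rule is_norm_sum[OF assms])
  also have "\<dots> = (\<Sum>b\<in>Basis. \<bar>x \<bullet> b\<bar> * N b)" by (simp add: is_norm_scaleR[OF assms])
  also have "\<dots> \<le> (\<Sum>b\<in>Basis. norm x * N b)"
    by (rule sum_mono) (simp add: Basis_le_norm is_norm_nonneg[OF assms] mult_right_mono)
  finally show ?thesis by (simp add: sum_distrib_left mult.commute)
qed

lemma is_norm_continuous:
  fixes N :: "'a::euclidean_space \<Rightarrow> real"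
  assumes "is_norm N" shows "continuous_on S N"
proof (rule lipschitz_on_continuous_on[OF lipschitz_onI])
  let ?B = "\<Sum>b\<in>Basis. N b"
  show "?B \<ge> 0" by (simp add: sum_nonneg is_norm_nonneg[OF assms])
  fix x y
  have "N x \<le> N y + N (x - y)" "N y \<le> N x + N (y - x)"
    using is_norm_triangle[OF assms] by (metis add.commute diff_add_cancel)+
  moreover have "N (x - y) \<le> ?B * dist x y" "N (y - x) \<le> ?B * dist x y"
    using is_norm_le_sum_Basis[OF assms] by (metis dist_norm dist_commute)+
  ultimately show "dist (N x) (N y) \<le> ?B * dist x y" by (simp add: dist_real_def)
qed

text \<open>Half of the equivalence of norms in finite dimensions: \<open>N\<close> attains a positive minimum
  on the Euclidean unit sphere.\<close>
lemma is_norm_dominates_norm: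
  fixes N :: "'a::euclidean_space \<Rightarrow> real"
  assumes N: "is_norm N" obtains c where "c > 0" "\<And>x. norm x \<le> c * N x"
proof -
  have "sphere (0::'a) 1 \<noteq> {}" by simp
  then obtain u where u: "u \<in> sphere 0 1" "\<And>y. y \<in> sphere 0 1 \<Longrightarrow> N u \<le> N y"
    using continuous_attains_inf[OF compact_sphere _ is_norm_continuous[OF N]] by blast
  have "u \<noteq> 0" using u(1) by auto
  then have Nu: "N u > 0" by (rule is_norm_pos[OF N])
  have "norm x \<le> (1 / N u) * N x" for x
  proof (cases "x = 0")
    case False
    have "N u \<le> N (x /\<^sub>R norm x)" using u(2) False by simp
    also have "\<dots> = N x / norm x" using is_norm_scaleR[OF N] by (simp add: divide_inverse_commute)
    finally show ?thesis using False Nu by (simp add: field_simps)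
  qed (simp add: is_norm_zero[OF N])
  then show ?thesis using that[of "1 / N u"] Nu by simp
qed

lemma bdd_above_op_norm_gen_set:
  fixes A :: "'a::euclidean_space \<Rightarrow> 'b::euclidean_space"
  assumes N: "is_norm N" and NY: "is_norm NY" and A: "linear A"
  shows "bdd_above {inner (A x) y | x y. N x \<le> 1 \<and> NY y \<le> 1}"
proof -
  obtain c1 where c1: "c1 > 0" "\<And>x. norm x \<le> c1 * N x" using is_norm_dominates_norm[OF N] by blast
  obtain c2 where c2: "c2 > 0" "\<And>y. norm y \<le> c2 * NY y" using is_norm_dominates_norm[OF NY] by blast
  obtain K where K: "K > 0" "\<And>x. norm (A x) \<le> norm x * K"
    using bounded_linear.pos_bounded[OF linear_conv_bounded_linear[THEN iffD1, OF A]] by blast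
  have "inner (A x) y \<le> (c1 * K) * c2" if "N x \<le> 1" "NY y \<le> 1" for x y
  proof -
    have "norm x \<le> c1" using order_trans[OF c1(2) mult_left_le[OF that(1)]] c1(1) by simp
    moreover have "norm y \<le> c2" using order_trans[OF c2(2) mult_left_le[OF that(2)]] c2(1) by simp
    ultimately have "norm x * K * norm y \<le> c1 * K * c2" using K(1) c1(1) by (intro mult_mono) auto
    moreover have "inner (A x) y \<le> norm x * K * norm y"
      using norm_cauchy_schwarz[of "A x" y] K(2)[of x] by (meson mult_right_mono norm_ge_zero order_trans)
    ultimately show ?thesis by linarith
  qed
  then show ?thesis by (intro bdd_aboveI[where M = "c1 * K * c2"]) blast
qed

lemma op_norm_gen_nonneg:
  fixes A :: "'a::euclidean_space \<Rightarrow> 'b::euclidean_space"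
  assumes N: "is_norm N" and NY: "is_norm NY" and A: "linear A"
  shows "op_norm_gen N NY A \<ge> 0"
  unfolding op_norm_gen_def
  using is_norm_zero[OF N] is_norm_zero[OF NY] linear_0[OF A]
  by (intro cSup_upper[OF _ bdd_above_op_norm_gen_set[OF assms]]) (auto intro!: exI[of _ 0])

lemma inner_le_op_norm_gen:
  fixes A :: "'a::euclidean_space \<Rightarrow> 'b::euclidean_space"
  assumes N: "is_norm N" and NY: "is_norm NY" and A: "linear A"
  shows "inner (A x) y \<le> op_norm_gen N NY A * N x * NY y"
proof (cases "x = 0 \<or> y = 0")
  case True
  then show ?thesis using linear_0[OF A] is_norm_zero[OF N] is_norm_zero[OF NY] by auto
next
  case False
  then have Nx: "N x > 0" and NYy: "NY y > 0" using is_norm_pos N NY by blast+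
  have "N (x /\<^sub>R N x) = 1" "NY (y /\<^sub>R NY y) = 1"
    using Nx NYy is_norm_scaleR[OF N] is_norm_scaleR[OF NY] by simp_all
  then have "inner (A (x /\<^sub>R N x)) (y /\<^sub>R NY y) \<le> op_norm_gen N NY A"
    unfolding op_norm_gen_def
    by (intro cSup_upper[OF _ bdd_above_op_norm_gen_set[OF assms]]) fastforce
  moreover have "inner (A (x /\<^sub>R N x)) (y /\<^sub>R NY y) = inner (A x) y / (N x * NY y)"
    using A by (simp add: linear_scale field_simps)
  ultimately show ?thesis using Nx NYy by (simp add: divide_le_eq mult.commute mult.left_commute)
qed

lemma has_derivative_directional_quotient:
  fixes f :: "'a::real_normed_vector \<Rightarrow> real"
  assumes "(f has_derivative f') (at z)"
  shows "((\<lambda>t. (f (z + t *\<^sub>R w) - f z) / t) \<longlongrightarrow> f' w) (at_right 0)"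
proof -
  have line: "((\<lambda>t::real. z + t *\<^sub>R w) has_derivative (\<lambda>t. t *\<^sub>R w)) (at 0)"
    by (auto intro!: derivative_eq_intros)
  have "(f has_derivative f') (at ((\<lambda>t::real. z + t *\<^sub>R w) 0))" using assms by simp
  from diff_chain_at[OF line this]
  have "((\<lambda>t. f (z + t *\<^sub>R w)) has_derivative (\<lambda>t. f' (t *\<^sub>R w))) (at 0)"
    by (simp add: o_def)
  moreover have "linear f'" using assms has_derivative_linear by blast
  ultimately have "((\<lambda>t. f (z + t *\<^sub>R w)) has_real_derivative f' w) (at 0)"
    by (simp add: has_field_derivative_def linear_scale mult.commute[of _ "f' w"])
  then show ?thesis
    unfolding has_field_derivative_iff by (simp add: filterlim_at_split)
qed

text \<open>By strong convexity the difference quotients of \<open>v\<close> at \<open>z\<close> along \<open>y - z\<close> stay below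
  \<open>v y - v z - \<sigma>/2 (1 - t) \<parallel>y - z\<parallel>\<^sup>2\<close>; let \<open>t \<rightarrow> 0\<^sup>+\<close>.\<close>
lemma strongly_convex_on_bregman_lower:
  fixes v :: "'b::real_inner \<Rightarrow> real"
  assumes sc: "strongly_convex_on Y v \<sigma> NY"
    and dv: "(v has_derivative (\<lambda>h. inner G h)) (at z)" and y: "y \<in> Y" and z: "z \<in> Y"
  shows "\<sigma> / 2 * (NY (y - z))\<^sup>2 \<le> v y - v z - inner G (y - z)"
proof -
  define c where "c = \<sigma> / 2 * (NY (y - z))\<^sup>2"
  have convex_combination: "v ((1 - s) *\<^sub>R y + s *\<^sub>R z)
      \<le> (1 - s) * v y + s * v z - \<sigma> / 2 * s * (1 - s) * (NY (y - z))\<^sup>2" if "s \<in> {0..1}" for s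
    using sc y z that unfolding strongly_convex_on_def by blast
  have "\<forall>\<^sub>F t in at_right (0::real). t \<in> {0<..<1}" by (rule eventually_at_right_real) simp
  then have "\<forall>\<^sub>F t in at_right 0. (v (z + t *\<^sub>R (y - z)) - v z) / t \<le> v y - v z - c * (1 - t)"
  proof (rule eventually_mono)
    fix t :: real assume t: "t \<in> {0<..<1}"
    have "v ((1 - (1 - t)) *\<^sub>R y + (1 - t) *\<^sub>R z)
        \<le> (1 - (1 - t)) * v y + (1 - t) * v z - \<sigma> / 2 * (1 - t) * (1 - (1 - t)) * (NY (y - z))\<^sup>2"
      using convex_combination[of "1 - t"] t by simp
    moreover have "(1 - (1 - t)) *\<^sub>R y + (1 - t) *\<^sub>R z = z + t *\<^sub>R (y - z)" by (simp add: algebra_simps)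
    ultimately have "v (z + t *\<^sub>R (y - z)) \<le> t * v y + (1 - t) * v z - c * t * (1 - t)"
      by (simp add: c_def algebra_simps)
    then have "v (z + t *\<^sub>R (y - z)) - v z \<le> (v y - v z - c * (1 - t)) * t"
      by (simp add: algebra_simps)
    then show "(v (z + t *\<^sub>R (y - z)) - v z) / t \<le> v y - v z - c * (1 - t)"
      using t by (simp add: pos_divide_le_eq)
  qed
  moreover have "((\<lambda>t. v y - v z - c * (1 - t)) \<longlongrightarrow> v y - v z - c * (1 - 0)) (at_right 0)"
    by (intro tendsto_intros)
  ultimately have "inner G (y - z) \<le> v y - v z - c * (1 - 0)"
    by (intro tendsto_le[OF _ _ has_derivative_directional_quotient[OF dv]]) simp_all
  then show ?thesis by (simp add: c_def)
qed

lemma bregman_le_D_vY: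
  assumes "bdd_above (bregman_set Y v gv)" and "y \<in> Y" and "z \<in> Y"
  shows "v y - v z - inner (gv z) (y - z) \<le> D_vY Y v gv"
  unfolding D_vY_def using assms by (intro cSup_upper) (auto simp: bregman_set_def)

lemma D_vY_nonneg:
  assumes "bdd_above (bregman_set Y v gv)" and "y \<in> Y"
  shows "D_vY Y v gv \<ge> 0"
  using bregman_le_D_vY[OF assms assms(2)] by simp

lemma prox_function_norm_diff_le:
  assumes "prox_function Y v gv \<sigma> NY" and "bdd_above (bregman_set Y v gv)"
    and "y \<in> Y" and "z \<in> Y"
  shows "NY (y - z) \<le> sqrt (2 * D_vY Y v gv / \<sigma>)"
proof -
  have "\<sigma> > 0" and "strongly_convex_on Y v \<sigma> NY"
    and "(v has_derivative (\<lambda>h. inner (gv z) h)) (at z)"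
    using assms(1,4) unfolding prox_function_def by auto
  then have "\<sigma> / 2 * (NY (y - z))\<^sup>2 \<le> D_vY Y v gv"
    using strongly_convex_on_bregman_lower bregman_le_D_vY[OF assms(2-4)] assms(3,4) by fastforce
  with \<open>\<sigma> > 0\<close> have "(NY (y - z))\<^sup>2 \<le> 2 * D_vY Y v gv / \<sigma>" by (simp add: field_simps)
  then show ?thesis by (rule real_le_rsqrt)
qed

lemma Fmax_attained:
  fixes A :: "'a \<Rightarrow> 'b::real_inner"
  assumes "compact Y" and "Y \<noteq> {}" and "continuous_on Y g"
  obtains y where "y \<in> Y" and "Fmax A g Y x = inner (A x) y - g y"
    and "\<And>y'. y' \<in> Y \<Longrightarrow> inner (A x) y' - g y' \<le> Fmax A g Y x"
proof -
  have "continuous_on Y (\<lambda>y. inner (A x) y - g y)"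
    by (intro continuous_intros assms(3))
  then obtain y where y: "y \<in> Y" "\<And>y'. y' \<in> Y \<Longrightarrow> inner (A x) y' - g y' \<le> inner (A x) y - g y"
    using continuous_attains_sup[OF assms(1,2)] by blast
  then have "Fmax A g Y x = inner (A x) y - g y"
    unfolding Fmax_def by (intro cSup_eq_maximum) auto
  with y that show ?thesis by simp
qed

lemma Fmax_upper:
  fixes A :: "'a \<Rightarrow> 'b::real_inner"
  assumes "compact Y" and "Y \<noteq> {}" and "continuous_on Y g" and "y \<in> Y"
  shows "inner (A x) y - g y \<le> Fmax A g Y x"
  using Fmax_attained[OF assms(1-3)] assms(4) by metis

lemma subdiff_Fmax_gap:
  fixes A :: "'a::real_inner \<Rightarrow> 'b::real_inner"
  assumes A: "linear A" and s: "s \<in> subdiff (Fmax A g Y) x1"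
    and y0: "Fmax A g Y x0 = inner (A x0) y0 - g y0"
    and y2: "Fmax A g Y (x1 - (x0 - x1)) = inner (A (x1 - (x0 - x1))) y2 - g y2"
    and max_x1: "\<And>y. y \<in> Y \<Longrightarrow> inner (A x1) y - g y \<le> Fmax A g Y x1"
    and "y0 \<in> Y" and "y2 \<in> Y"
  shows "Fmax A g Y x0 - Fmax A g Y x1 - inner s (x0 - x1) \<le> inner (A (x0 - x1)) (y0 - y2)"
proof -
  let ?F = "Fmax A g Y" and ?d = "x0 - x1"
  have "?F x1 + inner s ((x1 - ?d) - x1) \<le> ?F (x1 - ?d)"
    using s unfolding subdiff_def by blast
  also have "\<dots> = inner (A x1) y2 - inner (A ?d) y2 - g y2"
    using y2 linear_diff[OF A] by (simp add: inner_diff_left)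
  finally have "?F x1 - inner s ?d \<le> inner (A x1) y2 - inner (A ?d) y2 - g y2"
    by (simp add: inner_diff_right)
  moreover have "?F x0 = inner (A x1) y0 + inner (A ?d) y0 - g y0"
    using y0 linear_diff[OF A, of x0 x1] by (simp add: inner_diff_left)
  moreover have "inner (A x1) y0 - g y0 \<le> ?F x1" "inner (A x1) y2 - g y2 \<le> ?F x1"
    using max_x1 \<open>y0 \<in> Y\<close> \<open>y2 \<in> Y\<close> by auto
  ultimately show ?thesis by (simp add: inner_diff_right)
qed

theorem lemma4p6:
  fixes A :: "real^'n \<Rightarrow> real^'m" and g :: "real^'m \<Rightarrow> real" and Y :: "(real^'m) set"
    and N :: "real^'n \<Rightarrow> real" and NY :: "real^'m \<Rightarrow> real"
    and v :: "real^'m \<Rightarrow> real" and gv :: "real^'m \<Rightarrow> real^'m" and \<sigma> :: real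
    and x0 x1 s :: "real^'n"
  assumes "Y \<noteq> {}" and "convex Y" and "compact Y"
    and "continuous_on Y g" and "convex_on Y g"
    and "linear A"
    and "is_norm N" and "is_norm NY"
    and "prox_function Y v gv \<sigma> NY"
    and "bdd_above (bregman_set Y v gv)"
    and "s \<in> subdiff (Fmax A g Y) x1"
  shows "Fmax A g Y x0 - Fmax A g Y x1 - inner s (x0 - x1)
           \<le> 2 * sqrt (2 * (op_norm_gen N NY A)\<^sup>2 * D_vY Y v gv / \<sigma>) * N (x0 - x1)"
proof -
  let ?L = "op_norm_gen N NY A" and ?D = "D_vY Y v gv" and ?d = "x0 - x1"
  obtain y0 where y0: "y0 \<in> Y" "Fmax A g Y x0 = inner (A x0) y0 - g y0"
    using Fmax_attained[OF assms(3,1,4)] by metis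
  obtain y2 where y2: "y2 \<in> Y" "Fmax A g Y (x1 - ?d) = inner (A (x1 - ?d)) y2 - g y2"
    using Fmax_attained[OF assms(3,1,4)] by metis
  have "Fmax A g Y x0 - Fmax A g Y x1 - inner s ?d \<le> inner (A ?d) (y0 - y2)"
    using Fmax_upper[OF assms(3,1,4)] y0 y2 by (intro subdiff_Fmax_gap[OF assms(6,11)])
  also have "\<dots> \<le> ?L * N ?d * NY (y0 - y2)"
    by (rule inner_le_op_norm_gen[OF assms(7,8,6)])
  also have "\<dots> \<le> ?L * N ?d * sqrt (2 * ?D / \<sigma>)"
    using op_norm_gen_nonneg[OF assms(7,8,6)] is_norm_nonneg[OF assms(7)]
    by (intro mult_left_mono[OF prox_function_norm_diff_le[OF assms(9,10) y0(1) y2(1)]]) simp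
  also have "\<dots> = sqrt (2 * ?L\<^sup>2 * ?D / \<sigma>) * N ?d"
    using op_norm_gen_nonneg[OF assms(7,8,6)] by (simp add: real_sqrt_mult real_sqrt_divide)
  also have "\<dots> \<le> 2 * sqrt (2 * ?L\<^sup>2 * ?D / \<sigma>) * N ?d"
  proof -
    have "\<sigma> > 0" using assms(9) unfolding prox_function_def by blast
    then have "sqrt (2 * ?L\<^sup>2 * ?D / \<sigma>) * N ?d \<ge> 0"
      using D_vY_nonneg[OF assms(10) y0(1)] is_norm_nonneg[OF assms(7)] by simp
    then show ?thesis by linarith
  qed
  finally show ?thesis .
qed

end
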